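(* Let $n=3$, let $a_{11},a_{22},a_{33}\ge0$, and let $a_{13}=a_{21}=a_{32}=1$ and $a_{12}=a_{23}=a_{31}=0$. Then there exist $\pi_1,\pi_2,\pi_3>0$ such that $$\kappa:=\min_{i=1,2,3}\Big(8\pi_ia_{ii}-\sum_{j=1,\,j\ne i}^3\pi_ja_{ji}\Big)>0$$ if and only if $a_{11}a_{22}a_{33}>8^{-3}$. *)

theory Defs
  imports Complex_Main
begin

end

theory Submission
  imports Defs
begin

text \<open>With this cyclic pattern of off-diagonal entries, \<open>\<kappa> > 0\<close> says exactly that
  \<open>\<pi>\<^sub>2 < 8 a\<^sub>1\<^sub>1 \<pi>\<^sub>1\<close>, \<open>\<pi>\<^sub>3 < 8 a\<^sub>2\<^sub>2 \<pi>\<^sub>2\<close> and \<open>\<pi>\<^sub>1 < 8 a\<^sub>3\<^sub>3 \<pi>\<^sub>3\<close>. Multiplying the three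
  inequalities and cancelling \<open>\<pi>\<^sub>1 \<pi>\<^sub>2 \<pi>\<^sub>3\<close> gives \<open>512 a\<^sub>1\<^sub>1 a\<^sub>2\<^sub>2 a\<^sub>3\<^sub>3 > 1\<close>; conversely a
  geometric choice of the \<open>\<pi>\<^sub>i\<close> solves the system whenever this product exceeds 1.\<close>

lemma cyclic_product_gt_one_if_solvable:
  fixes c1 c2 c3 p1 p2 p3 :: real
  assumes "0 < p1" "0 < p2" "0 < p3"
    and "p2 < c1 * p1" "p3 < c2 * p2" "p1 < c3 * p3"
  shows "1 < c1 * c2 * c3"
proof -
  have "p2 * p3 < (c1 * p1) * (c2 * p2)"
    using assms by (intro mult_strict_mono) auto
  then have "p2 * p3 * p1 < (c1 * p1) * (c2 * p2) * (c3 * p3)"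
    using assms by (intro mult_strict_mono) auto
  then have "1 * (p1 * p2 * p3) < (c1 * c2 * c3) * (p1 * p2 * p3)"
    by (simp add: algebra_simps)
  then show ?thesis
    using assms by (simp only: mult_less_cancel_right_pos mult_pos_pos)
qed

text \<open>With \<open>t\<close> the cube root of the product, the ratios \<open>p\<^sub>i\<^sub>+\<^sub>1 / p\<^sub>i = c\<^sub>i / t\<close> close the cycle
  and leave the factor \<open>t > 1\<close> of slack in each inequality.\<close>

lemma cyclic_system_solvable_if_product_gt_one:
  fixes c1 c2 c3 :: real
  assumes "0 \<le> c1" "0 \<le> c2" "0 \<le> c3" and "1 < c1 * c2 * c3"
  obtains p1 p2 p3 where "0 < p1" "0 < p2" "0 < p3"
    and "p2 < c1 * p1" "p3 < c2 * p2" "p1 < c3 * p3"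
proof -
  define t where "t = root 3 (c1 * c2 * c3)"
  have t_cube: "t ^ 3 = c1 * c2 * c3"
    using assms by (simp add: t_def real_root_pow_pos)
  have "1 < t"
    using assms by (simp add: t_def)
  have "0 < c1" "0 < c2" "0 < c3"
    using assms by (auto simp: order_le_less)
  show thesis
  proof
    show "0 < (1::real)" "0 < c1 / t" "0 < c1 * c2 / t\<^sup>2"
      using \<open>0 < c1\<close> \<open>0 < c2\<close> \<open>1 < t\<close> by auto
    show "c1 / t < c1 * 1"
      using \<open>0 < c1\<close> \<open>1 < t\<close> by (simp add: divide_less_eq)
    show "c1 * c2 / t\<^sup>2 < c2 * (c1 / t)"
      using \<open>0 < c1\<close> \<open>0 < c2\<close> \<open>1 < t\<close> by (simp add: field_simps power2_eq_square)
    have "c3 * (c1 * c2 / t\<^sup>2) = t"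
      using \<open>1 < t\<close> t_cube by (simp add: field_simps power2_eq_square power3_eq_cube)
    then show "1 < c3 * (c1 * c2 / t\<^sup>2)"
      using \<open>1 < t\<close> by simp
  qed
qed

theorem lemma15:
  fixes a :: "nat \<Rightarrow> nat \<Rightarrow> real"
  assumes "a 1 1 \<ge> 0" and "a 2 2 \<ge> 0" and "a 3 3 \<ge> 0"
    and "a 1 3 = 1" and "a 2 1 = 1" and "a 3 2 = 1"
    and "a 1 2 = 0" and "a 2 3 = 0" and "a 3 1 = 0"
  shows "(\<exists>\<pi> :: nat \<Rightarrow> real. (\<forall>i\<in>{1,2,3}. \<pi> i > 0) \<and>
            Min ((\<lambda>i. 8 * \<pi> i * a i i - (\<Sum>j\<in>{1,2,3} - {i}. \<pi> j * a j i)) ` {1,2,3}) > 0)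
         \<longleftrightarrow> a 1 1 * a 2 2 * a 3 3 > 8 powi (-3)"
proof -
  have kappa_pos_iff: "Min ((\<lambda>i. 8 * \<pi> i * a i i - (\<Sum>j\<in>{1,2,3} - {i}. \<pi> j * a j i)) ` {1,2,3}) > 0
      \<longleftrightarrow> \<pi> 2 < (8 * a 1 1) * \<pi> 1 \<and> \<pi> 3 < (8 * a 2 2) * \<pi> 2 \<and> \<pi> 1 < (8 * a 3 3) * \<pi> 3"
    for \<pi> :: "nat \<Rightarrow> real"
    using assms by (simp add: Min_gr_iff insert_Diff_if algebra_simps)
  have threshold: "a 1 1 * a 2 2 * a 3 3 > 8 powi (-3) \<longleftrightarrow> 1 < (8 * a 1 1) * (8 * a 2 2) * (8 * a 3 3)"
    by (simp add: power_int_minus divide_less_eq algebra_simps)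
  show ?thesis
    unfolding kappa_pos_iff threshold
  proof
    assume "\<exists>\<pi> :: nat \<Rightarrow> real. (\<forall>i\<in>{1,2,3}. \<pi> i > 0) \<and>
      \<pi> 2 < (8 * a 1 1) * \<pi> 1 \<and> \<pi> 3 < (8 * a 2 2) * \<pi> 2 \<and> \<pi> 1 < (8 * a 3 3) * \<pi> 3"
    then obtain \<pi> :: "nat \<Rightarrow> real" where "0 < \<pi> 1" "0 < \<pi> 2" "0 < \<pi> 3"
      and "\<pi> 2 < (8 * a 1 1) * \<pi> 1" "\<pi> 3 < (8 * a 2 2) * \<pi> 2" "\<pi> 1 < (8 * a 3 3) * \<pi> 3"
      by auto
    then show "1 < (8 * a 1 1) * (8 * a 2 2) * (8 * a 3 3)"
      by (rule cyclic_product_gt_one_if_solvable)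
  next
    assume "1 < (8 * a 1 1) * (8 * a 2 2) * (8 * a 3 3)"
    then obtain p1 p2 p3 :: real where "0 < p1" "0 < p2" "0 < p3"
      and "p2 < (8 * a 1 1) * p1" "p3 < (8 * a 2 2) * p2" "p1 < (8 * a 3 3) * p3"
      using assms cyclic_system_solvable_if_product_gt_one[of "8 * a 1 1" "8 * a 2 2" "8 * a 3 3"]
      by auto
    then show "\<exists>\<pi> :: nat \<Rightarrow> real. (\<forall>i\<in>{1,2,3}. \<pi> i > 0) \<and>
      \<pi> 2 < (8 * a 1 1) * \<pi> 1 \<and> \<pi> 3 < (8 * a 2 2) * \<pi> 2 \<and> \<pi> 1 < (8 * a 3 3) * \<pi> 3"
      by (intro exI[of _ "\<lambda>i. if i = 1 then p1 else if i = 2 then p2 else p3"]) auto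
  qed
qed

end
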